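(* With the notation of the context, for every instance with two candidates $P,Q$ at least one of the following two inequalities holds: $$\sum_{l=k}^m\frac{\tau_{l+1}-\delta}{\tau_{l+1}-1}|B_l|\le\sum_{l=1}^m\frac{\delta\tau_l-1}{\tau_l+1}|A_l|+\sum_{l=1}^{k-1}\frac{\delta-\tau_{l+1}}{\tau_{l+1}+1}|B_l|,$$ $$\sum_{l=k}^m\frac{\tau_{l+1}-\delta}{\tau_{l+1}-1}|A_l|\le\sum_{l=1}^m\frac{\delta\tau_l-1}{\tau_l+1}|B_l|+\sum_{l=1}^{k-1}\frac{\delta-\tau_{l+1}}{\tau_{l+1}+1}|A_l|.$$ Hence a resolute rule selecting $P$ only when the first holds and $Q$ only when the second holds always exists.
   Context: Thresholds $1\le\tau_1<\dots<\tau_m$, $\tau_0=1/\tau_1$, $\tau_{m+1}=\infty$; $\delta=\max_{0\le l\le m}\frac{\tau_l\tau_{l+1}+2\tau_{l+1}-1}{\tau_l\tau_{l+1}+1}$ (the $l=m$ term meaning $(\tau_m+2)/\tau_m$); $k\in\{1,\dots,m\}$ satisfies $\tau_k\le\delta<\tau_{k+1}$; $\frac{\tau_{m+1}-\delta}{\tau_{m+1}-1}$ is interpreted as $1$. Voters and candidates lie in a metric space $(X,d)$; voter $i$'s preference strength for $P$ over $Q$ is $\alpha_i^{PQ}=d(i,Q)/d(i,P)$ when $d(i,P)\le d(i,Q)$. $A_l=\{i: d(i,P)\le d(i,Q),\ \tau_l\le\alpha_i^{PQ}<\tau_{l+1}\}$ and $B_l=\{j: d(j,Q)\le d(j,P),\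 \tau_l\le\alpha_j^{QP}<\tau_{l+1}\}$ for $l=1,\dots,m$. *)

theory Defs
  imports "HOL-Analysis.Analysis" "HOL-Library.Extended_Real"
begin

text \<open>When d(x,P) = 0 < d(x,Q) the ratio is +infinity;
  when both distances are 0 (P and Q at the voter's location) it is taken to be 1.\<close>
definition pref_strength :: "'a::metric_space \<Rightarrow> 'a \<Rightarrow> 'a \<Rightarrow> ereal" where
  "pref_strength x P Q =
     (if dist x P = 0 then (if dist x Q = 0 then 1 else \<infinity>)
      else ereal (dist x Q / dist x P))"

text \<open>Extended thresholds: tau_0 = 1/tau_1, tau_l for 1 <= l <= m (tau_{m+1} = infinity is
  handled separately wherever it occurs).\<close>
definition tau_ext :: "(nat \<Rightarrow> real) \<Rightarrow> nat \<Rightarrow> real" where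
  "tau_ext \<tau> l = (if l = 0 then 1 / \<tau> 1 else \<tau> l)"

definition delta :: "(nat \<Rightarrow> real) \<Rightarrow> nat \<Rightarrow> real" where
  "delta \<tau> m = Max ((\<lambda>l. (tau_ext \<tau> l * \<tau> (Suc l) + 2 * \<tau> (Suc l) - 1)
                              / (tau_ext \<tau> l * \<tau> (Suc l) + 1)) ` {0..<m}
                    \<union> {(\<tau> m + 2) / \<tau> m})"

definition coef_hi :: "(nat \<Rightarrow> real) \<Rightarrow> nat \<Rightarrow> nat \<Rightarrow> real" where
  "coef_hi \<tau> m l = (if l = m then 1 else (\<tau> (Suc l) - delta \<tau> m) / (\<tau> (Suc l) - 1))"

text \<open>A_l: voters (indices in N, located by loc) weakly preferring P to Q with
  tau_l <= alpha^{PQ} < tau_{l+1} (tau_{m+1} = infinity). B_l is obtained by swapping P and Q.\<close>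
definition pref_class ::
  "(nat \<Rightarrow> real) \<Rightarrow> nat \<Rightarrow> 'v set \<Rightarrow> ('v \<Rightarrow> 'a::metric_space) \<Rightarrow> 'a \<Rightarrow> 'a \<Rightarrow> nat \<Rightarrow> 'v set" where
  "pref_class \<tau> m N loc P Q l =
     {i \<in> N. dist (loc i) P \<le> dist (loc i) Q
            \<and> ereal (\<tau> l) \<le> pref_strength (loc i) P Q
            \<and> (l < m \<longrightarrow> pref_strength (loc i) P Q < ereal (\<tau> (Suc l)))}"

end

theory Submission
  imports Defs
begin

text \<open>Adding the two inequalities, it suffices to show their sum, i.e. the first inequality with
  every class size replaced by the total weight c l = |A_l| + |B_l|. This is a termwise comparison
  of coefficients: for l \<ge> k the coefficient (\<tau>_{l+1} - \<delta>)/(\<tau>_{l+1} - 1) is at most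
  (\<delta>\<tau>_l - 1)/(\<tau>_l + 1), which after clearing denominators is exactly the l-th term in the
  maximum defining \<delta>; for l < k we have \<tau>_{l+1} \<le> \<tau>_k \<le> \<delta>, so all remaining coefficients
  are nonnegative.\<close>

lemma tau_mono:
  fixes \<tau> :: "nat \<Rightarrow> real"
  assumes incr: "\<forall>l. 1 \<le> l \<and> l < m \<longrightarrow> \<tau> l < \<tau> (Suc l)"
    and "1 \<le> i" "i \<le> j" "j \<le> m"
  shows "\<tau> i \<le> \<tau> j"
  using \<open>i \<le> j\<close> \<open>j \<le> m\<close>
proof (induction j rule: dec_induct)
  case base
  then show ?case by simp
next
  case (step j)
  have "\<tau> j < \<tau> (Suc j)"
    using incr \<open>1 \<le> i\<close> step by simp
  with step show ?case by simp
qed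

lemma one_le_tau:
  fixes \<tau> :: "nat \<Rightarrow> real"
  assumes "1 \<le> \<tau> 1" and "\<forall>l. 1 \<le> l \<and> l < m \<longrightarrow> \<tau> l < \<tau> (Suc l)"
    and "1 \<le> l" "l \<le> m"
  shows "1 \<le> \<tau> l"
  using tau_mono[OF assms(2), of 1 l] assms by simp

lemma delta_ge_last: "(\<tau> m + 2) / \<tau> m \<le> delta \<tau> m"
  unfolding delta_def by (rule Max_ge) auto

lemma delta_ge_step:
  assumes "1 \<le> l" "l < m"
  shows "(\<tau> l * \<tau> (Suc l) + 2 * \<tau> (Suc l) - 1) / (\<tau> l * \<tau> (Suc l) + 1) \<le> delta \<tau> m"
proof -
  have "tau_ext \<tau> l = \<tau> l"
    using assms by (simp add: tau_ext_def)
  then show ?thesis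
    unfolding delta_def by (intro Max_ge) (use assms in force)+
qed

lemma coef_hi_le:
  fixes \<tau> :: "nat \<Rightarrow> real"
  assumes "1 \<le> \<tau> 1" and incr: "\<forall>l. 1 \<le> l \<and> l < m \<longrightarrow> \<tau> l < \<tau> (Suc l)"
    and "1 \<le> l" "l \<le> m"
  shows "coef_hi \<tau> m l \<le> (delta \<tau> m * \<tau> l - 1) / (\<tau> l + 1)"
proof -
  have tau_l: "1 \<le> \<tau> l"
    using one_le_tau assms by blast
  show ?thesis
  proof (cases "l = m")
    case True
    have "\<tau> m + 2 \<le> delta \<tau> m * \<tau> m"
      using delta_ge_last[of \<tau> m] tau_l True by (simp add: divide_le_eq)
    then show ?thesis
      using True tau_l by (simp add: coef_hi_def field_simps)
  next
    case False
    then have "l < m" using \<open>l \<le> m\<close> by simp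
    have tau_Suc: "\<tau> l < \<tau> (Suc l)"
      using incr \<open>1 \<le> l\<close> \<open>l < m\<close> by simp
    have "0 < \<tau> l * \<tau> (Suc l) + 1"
      using tau_l tau_Suc by (smt (verit) mult_nonneg_nonneg)
    then have "\<tau> l * \<tau> (Suc l) + 2 * \<tau> (Suc l) - 1 \<le> delta \<tau> m * (\<tau> l * \<tau> (Suc l) + 1)"
      using delta_ge_step[OF \<open>1 \<le> l\<close> \<open>l < m\<close>, of \<tau>] by (simp add: divide_le_eq mult.commute)
    then have "(\<tau> (Suc l) - delta \<tau> m) * (\<tau> l + 1) \<le> (delta \<tau> m * \<tau> l - 1) * (\<tau> (Suc l) - 1)"
      by (simp add: algebra_simps)
    then show ?thesis
      using False tau_l tau_Suc by (simp add: coef_hi_def divide_simps)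
  qed
qed

lemma weighted_sum_le:
  fixes \<tau> :: "nat \<Rightarrow> real" and c :: "nat \<Rightarrow> real"
  assumes "1 \<le> \<tau> 1" and incr: "\<forall>l. 1 \<le> l \<and> l < m \<longrightarrow> \<tau> l < \<tau> (Suc l)"
    and "1 \<le> k" "k \<le> m" and "\<tau> k \<le> delta \<tau> m"
    and c_nonneg: "\<And>l. 0 \<le> c l"
  shows "(\<Sum>l=k..m. coef_hi \<tau> m l * c l)
           \<le> (\<Sum>l=1..m. (delta \<tau> m * \<tau> l - 1) / (\<tau> l + 1) * c l)
             + (\<Sum>l=1..<k. (delta \<tau> m - \<tau> (Suc l)) / (\<tau> (Suc l) + 1) * c l)"
proof -
  define d where "d = delta \<tau> m"
  define x where "x l = (d * \<tau> l - 1) / (\<tau> l + 1) * c l" for l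
  define y where "y l = (d - \<tau> (Suc l)) / (\<tau> (Suc l) + 1) * c l" for l
  have high: "(\<Sum>l=k..m. coef_hi \<tau> m l * c l) \<le> (\<Sum>l=k..m. x l)"
    unfolding x_def d_def
    by (intro sum_mono mult_right_mono coef_hi_le[OF assms(1,2)]) (use assms in auto)
  have low: "0 \<le> x l + y l" if "1 \<le> l" "l < k" for l
  proof -
    have tau_l: "1 \<le> \<tau> l"
      using one_le_tau assms that by simp
    have tau_Suc: "\<tau> l < \<tau> (Suc l)"
      using incr that assms by simp
    have d_ge: "\<tau> (Suc l) \<le> d"
      using tau_mono[OF incr, of "Suc l" k] that assms unfolding d_def by simp
    then have "1 \<le> d * \<tau> l"
      using tau_l tau_Suc mult_mono[of 1 d 1 "\<tau> l"] by simp
    then show ?thesis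
      unfolding x_def y_def using tau_l tau_Suc d_ge c_nonneg[of l]
      by (intro add_nonneg_nonneg mult_nonneg_nonneg divide_nonneg_nonneg) simp_all
  qed
  have "{1..m} = {1..<k} \<union> {k..m}"
    using assms by auto
  then have "(\<Sum>l=1..m. x l) = (\<Sum>l=1..<k. x l) + (\<Sum>l=k..m. x l)"
    by (simp add: sum.union_disjoint ivl_disj_int)
  moreover have "0 \<le> (\<Sum>l=1..<k. x l) + (\<Sum>l=1..<k. y l)"
    using sum_nonneg[of "{1..<k}" "\<lambda>l. x l + y l"] low by (simp add: sum.distrib)
  ultimately show ?thesis
    using high unfolding x_def y_def d_def by linarith
qed

theorem mainTheorem10:
  fixes \<tau> :: "nat \<Rightarrow> real" and m k :: nat
    and N :: "'v set" and loc :: "'v \<Rightarrow> 'a::metric_space" and P Q :: 'a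
  assumes "1 \<le> m"
    and "1 \<le> \<tau> 1"
    and "\<forall>l. 1 \<le> l \<and> l < m \<longrightarrow> \<tau> l < \<tau> (Suc l)"
    and "finite N"
    and "1 \<le> k" and "k \<le> m"
    and "\<tau> k \<le> delta \<tau> m"
    and "k < m \<longrightarrow> delta \<tau> m < \<tau> (Suc k)"
  shows "(\<Sum>l=k..m. coef_hi \<tau> m l * real (card (pref_class \<tau> m N loc Q P l)))
           \<le> (\<Sum>l=1..m. (delta \<tau> m * \<tau> l - 1) / (\<tau> l + 1) * real (card (pref_class \<tau> m N loc P Q l)))
             + (\<Sum>l=1..<k. (delta \<tau> m - \<tau> (Suc l)) / (\<tau> (Suc l) + 1) * real (card (pref_class \<tau> m N loc Q P l)))
       \<or> (\<Sum>l=k..m. coef_hi \<tau> m l * real (card (pref_class \<tau> m N loc P Q l)))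
           \<le> (\<Sum>l=1..m. (delta \<tau> m * \<tau> l - 1) / (\<tau> l + 1) * real (card (pref_class \<tau> m N loc Q P l)))
             + (\<Sum>l=1..<k. (delta \<tau> m - \<tau> (Suc l)) / (\<tau> (Suc l) + 1) * real (card (pref_class \<tau> m N loc P Q l)))"
proof -
  define a where "a l = real (card (pref_class \<tau> m N loc P Q l))" for l
  define b where "b l = real (card (pref_class \<tau> m N loc Q P l))" for l
  have "(\<Sum>l=k..m. coef_hi \<tau> m l * (a l + b l))
          \<le> (\<Sum>l=1..m. (delta \<tau> m * \<tau> l - 1) / (\<tau> l + 1) * (a l + b l))
            + (\<Sum>l=1..<k. (delta \<tau> m - \<tau> (Suc l)) / (\<tau> (Suc l) + 1) * (a l + b l))"
    by (rule weighted_sum_le) (use assms in \<open>auto simp: a_def b_def\<close>)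
  then show ?thesis
    unfolding a_def b_def distrib_left sum.distrib by linarith
qed

end
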